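(* Let $G$ be a group of order $n\ge 2$, let $g\in G$ be a non-identity element, and let $m\ge 3$ be an odd integer. Let $\Gamma$ be the digraph with vertex set $G\times G\times\mathbb{Z}_m$ in which $(x,y,i)\to(u,v,j)$ if and only if at least one of the following holds: (1) $x=u$, $i=j$ and $y\neq v$; (2) $y=v$, $i=j$ and $x\neq u$; (3) $u=xy$ and $j\in\{i+1,\dots,i+\tfrac{m-1}{2}\}$ (indices mod $m$); (4) $v=xy$ and $j\in\{i-\tfrac{m-1}{2},\dots,i-1\}$ (indices mod $m$); (5) $u=xyg$ and $j\in\{i+1,\dots,i+\tfrac{m-1}{2}\}$ (indices mod $m$); (6) $v=xyg$ and $j\in\{i-\tfrac{m-1}{2},\dots,i-1\}$ (indices mod $m$). Then $\Gamma$ is a directed strongly regular graph with parameters $(v,k,t,\lambda,\mu)=(mn^2,\ 2mn-2,\ 2n+4m-6,\ n+4m-6,\ 4m-2)$.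
   Context: A digraph here has no loops and no multiple arcs; its adjacency matrix $A$ has $A_{xy}=1$ iff $x\to y$. A directed strongly regular graph with parameters $(v,k,t,\lambda,\mu)$ is a digraph on $v$ vertices whose adjacency matrix $A$ satisfies $A^2=tI+\lambda A+\mu(J-I-A)$ and $AJ=JA=kJ$, where $I$ is the identity and $J$ the all-ones matrix. (The paper phrases the hypothesis on $g$ as "non-identity, non-idempotent", which in a group is the same as $g\ne$ identity.) *)

theory Defs
  imports "HOL-Algebra.Group"
begin

text \<open>The condition A^2 = tI + lam A + mu (J - I - A), AJ = JA = kJ is written out entrywise:
  (A^2)_{xy} is the number of z with x -> z -> y.\<close>
definition dsrg :: "'v set \<Rightarrow> ('v \<Rightarrow> 'v \<Rightarrow> bool) \<Rightarrow> nat \<Rightarrow> nat \<Rightarrow> nat \<Rightarrow> nat \<Rightarrow> nat \<Rightarrow> bool" where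
  "dsrg V A v k t lam mu \<longleftrightarrow>
     finite V \<and> card V = v \<and>
     (\<forall>x\<in>V. \<not> A x x) \<and>
     (\<forall>x\<in>V. card {y\<in>V. A x y} = k) \<and>
     (\<forall>y\<in>V. card {x\<in>V. A x y} = k) \<and>
     (\<forall>x\<in>V. \<forall>y\<in>V. card {z\<in>V. A x z \<and> A z y} =
        (if x = y then t else if A x y then lam else mu))"

definition fwd :: "nat \<Rightarrow> nat \<Rightarrow> nat \<Rightarrow> bool" where
  "fwd m i j \<longleftrightarrow> (\<exists>d. 1 \<le> d \<and> d \<le> (m - 1) div 2 \<and> j = (i + d) mod m)"

definition bwd :: "nat \<Rightarrow> nat \<Rightarrow> nat \<Rightarrow> bool" where
  "bwd m i j \<longleftrightarrow> (\<exists>d. 1 \<le> d \<and> d \<le> (m - 1) div 2 \<and> i = (j + d) mod m)"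

definition gamma_arc :: "('a, 'b) monoid_scheme \<Rightarrow> 'a \<Rightarrow> nat \<Rightarrow> 'a \<times> 'a \<times> nat \<Rightarrow> 'a \<times> 'a \<times> nat \<Rightarrow> bool" where
  "gamma_arc G g m p q = (case p of (x, y, i) \<Rightarrow> case q of (u, v, j) \<Rightarrow>
      (x = u \<and> i = j \<and> y \<noteq> v) \<or>
      (y = v \<and> i = j \<and> x \<noteq> u) \<or>
      (u = x \<otimes>\<^bsub>G\<^esub> y \<and> fwd m i j) \<or>
      (v = x \<otimes>\<^bsub>G\<^esub> y \<and> bwd m i j) \<or>
      (u = x \<otimes>\<^bsub>G\<^esub> y \<otimes>\<^bsub>G\<^esub> g \<and> fwd m i j) \<or>
      (v = x \<otimes>\<^bsub>G\<^esub> y \<otimes>\<^bsub>G\<^esub> g \<and> bwd m i j))"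

definition gamma_vertices :: "('a, 'b) monoid_scheme \<Rightarrow> nat \<Rightarrow> ('a \<times> 'a \<times> nat) set" where
  "gamma_vertices G m = carrier G \<times> carrier G \<times> {..<m}"

end

theory Submission
  imports Defs
begin

text \<open>Within each layer i the digraph is the rook's graph on G \<times> G. Since m is odd, for distinct
  layers i, l exactly one of fwd m i l and bwd m i l holds, and then (x, y, i) points to every
  (a, b, l) whose first, respectively second, coordinate lies in {xy, xyg}. The only property of
  the group that matters is that for g \<noteq> 1 the relation c \<in> {xy, xyg} is a twofold Latin
  square: any two of x, y, c leave exactly two choices for the third. Hence between any two
  vertices every layer other than their own carries exactly 4 paths of length 2, while the two
  layers of the endpoints contribute counts from the rook's graph.\<close>

lemma add_mod_if:
  fixes i d m :: nat
  assumes "i < m" "d < m"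
  shows "(i + d) mod m = (if i + d < m then i + d else i + d - m)"
  using assms by (simp add: le_mod_geq)

lemma not_fwd_self: "i < m \<Longrightarrow> \<not> fwd m i i"
  by (auto simp: fwd_def add_mod_if split: if_splits)

lemma not_bwd_self: "i < m \<Longrightarrow> \<not> bwd m i i"
  by (auto simp: bwd_def add_mod_if split: if_splits)

lemma not_fwd_and_bwd:
  assumes "odd m" "i < m"
  shows "\<not> (fwd m i l \<and> bwd m i l)"
proof
  assume "fwd m i l \<and> bwd m i l"
  then obtain d e where d: "1 \<le> d" "d \<le> (m - 1) div 2" "l = (i + d) mod m"
    and e: "1 \<le> e" "e \<le> (m - 1) div 2" "i = (l + e) mod m"
    unfolding fwd_def bwd_def by blast
  have "d + e < m" using d(2) e(2) \<open>odd m\<close> by (auto elim!: oddE)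
  have "l < m" using d(3) \<open>i < m\<close> by simp
  have "l = i + d \<or> l + m = i + d"
    using d(3) \<open>i < m\<close> \<open>d + e < m\<close> by (auto simp: add_mod_if)
  moreover have "i = l + e \<or> i + m = l + e"
    using e(3) \<open>l < m\<close> \<open>d + e < m\<close> by (auto simp: add_mod_if)
  ultimately show False using \<open>d + e < m\<close> d(1) e(1) by linarith
qed

lemma fwd_or_bwd:
  assumes "odd m" "i < m" "l < m" "l \<noteq> i"
  shows "fwd m i l \<or> bwd m i l"
proof -
  define d where "d = (if i < l then l - i else l + m - i)"
  have d: "1 \<le> d" "d < m" using assms d_def by auto
  show ?thesis
  proof (cases "d \<le> (m - 1) div 2")
    case True
    have "l = (i + d) mod m" using assms d by (simp add: add_mod_if) (auto simp: d_def)
    then show ?thesis using True d unfolding fwd_def by blast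
  next
    case False
    have "i = (l + (m - d)) mod m" using assms d by (simp add: add_mod_if) (auto simp: d_def)
    moreover have "1 \<le> m - d" "m - d \<le> (m - 1) div 2" using False d assms by (auto elim!: oddE)
    ultimately show ?thesis unfolding bwd_def by blast
  qed
qed

lemma sum_lessThan_remove_const:
  assumes "i < m" "\<And>l. l < m \<Longrightarrow> l \<noteq> i \<Longrightarrow> f l = c"
  shows "(\<Sum>l<m. f l) = f i + (m - 1) * (c :: nat)"
proof -
  have "(\<Sum>l<m. f l) = f i + (\<Sum>l\<in>{..<m} - {i}. f l)" using assms by (simp add: sum.remove)
  also have "(\<Sum>l\<in>{..<m} - {i}. f l) = (\<Sum>l\<in>{..<m} - {i}. c)" using assms by (intro sum.cong) auto
  finally show ?thesis using assms by simp
qed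

lemma sum_lessThan_remove2_const:
  assumes "i < m" "j < m" "i \<noteq> j" "\<And>l. l < m \<Longrightarrow> l \<noteq> i \<Longrightarrow> l \<noteq> j \<Longrightarrow> f l = c"
  shows "(\<Sum>l<m. f l) = f i + f j + (m - 2) * (c :: nat)"
proof -
  have "(\<Sum>l<m. f l) = f i + (\<Sum>l\<in>{..<m} - {i}. f l)" using assms by (simp add: sum.remove)
  also have "(\<Sum>l\<in>{..<m} - {i}. f l) = f j + (\<Sum>l\<in>{..<m} - {i} - {j}. f l)"
    using assms by (intro sum.remove) auto
  also have "(\<Sum>l\<in>{..<m} - {i} - {j}. f l) = (\<Sum>l\<in>{..<m} - {i} - {j}. c)"
    using assms by (intro sum.cong) auto
  also have "\<dots> = (m - 2) * c" using assms by (simp add: card_Diff_singleton_if numeral_2_eq_2)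
  finally show ?thesis by simp
qed

lemma sum_sum_of_bool_eq_card:
  assumes "finite S"
  shows "(\<Sum>a\<in>S. \<Sum>b\<in>S. of_bool (P a b)) = card {(a, b). a \<in> S \<and> b \<in> S \<and> P a b}"
proof -
  have "(\<Sum>a\<in>S. \<Sum>b\<in>S. of_bool (P a b)) = (\<Sum>p\<in>S \<times> S. of_bool (case p of (a, b) \<Rightarrow> P a b))"
    by (simp only: sum.cartesian_product split_def)
  also have "\<dots> = card ((S \<times> S) \<inter> {p. case p of (a, b) \<Rightarrow> P a b})"
    using assms by simp
  also have "(S \<times> S) \<inter> {p. case p of (a, b) \<Rightarrow> P a b} = {(a, b). a \<in> S \<and> b \<in> S \<and> P a b}"
    by auto
  finally show ?thesis .
qed

lemma card_layers:
  fixes m :: nat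
  assumes "finite S"
  shows "card {z \<in> S \<times> S \<times> {..<m}. P z} = (\<Sum>l<m. \<Sum>a\<in>S. \<Sum>b\<in>S. of_bool (P (a, b, l)))"
proof -
  have "card {z \<in> S \<times> S \<times> {..<m}. P z} = (\<Sum>z\<in>S \<times> S \<times> {..<m}. of_bool (P z))"
    using assms by (simp add: Int_def)
  also have "\<dots> = (\<Sum>a\<in>S. \<Sum>b\<in>S. \<Sum>l<m. of_bool (P (a, b, l)))"
    by (simp only: sum.cartesian_product')
  also have "\<dots> = (\<Sum>a\<in>S. \<Sum>l<m. \<Sum>b\<in>S. of_bool (P (a, b, l)))"
    by (rule sum.cong[OF refl], rule sum.swap)
  also have "\<dots> = (\<Sum>l<m. \<Sum>a\<in>S. \<Sum>b\<in>S. of_bool (P (a, b, l)))"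
    by (rule sum.swap)
  finally show ?thesis .
qed

definition rook_adj :: "'a \<Rightarrow> 'a \<Rightarrow> 'a \<Rightarrow> 'a \<Rightarrow> bool" where
  "rook_adj x y a b \<longleftrightarrow> (x = a \<and> y \<noteq> b) \<or> (y = b \<and> x \<noteq> a)"

lemma rook_adj_sym: "rook_adj x y a b = rook_adj a b x y"
  unfolding rook_adj_def by auto

lemma card_image_Pair_left [simp]: "card ((\<lambda>b. (x, b)) ` B) = card B"
  by (rule card_image) (auto simp: inj_on_def)

lemma card_image_Pair_right [simp]: "card ((\<lambda>a. (a, y)) ` B) = card B"
  by (rule card_image) (auto simp: inj_on_def)

lemma rook_degree:
  assumes "finite S" "x \<in> S" "y \<in> S"
  shows "(\<Sum>a\<in>S. \<Sum>b\<in>S. of_bool (rook_adj x y a b)) = 2 * card S - 2"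
proof -
  have "{(a, b). a \<in> S \<and> b \<in> S \<and> rook_adj x y a b} =
    (\<lambda>b. (x, b)) ` (S - {y}) \<union> (\<lambda>a. (a, y)) ` (S - {x})"
    using assms unfolding rook_adj_def by auto
  moreover have "card (\<dots>) = card (S - {y}) + card (S - {x})"
    using assms by (subst card_Un_disjoint) auto
  moreover have "card S \<ge> 1" using assms card_0_eq by fastforce
  ultimately show ?thesis using assms by (simp add: sum_sum_of_bool_eq_card del: sum_of_bool_eq)
qed

lemma rook_common_neighbours:
  assumes "finite S" "x \<in> S" "y \<in> S" "u \<in> S" "v \<in> S"
  shows "(\<Sum>a\<in>S. \<Sum>b\<in>S. of_bool (rook_adj x y a b \<and> rook_adj a b u v)) =
    (if (x, y) = (u, v) then 2 * card S - 2 else if rook_adj x y u v then card S - 2 else 2)"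
    (is "?N = _")
proof -
  have N: "?N = card {(a, b). a \<in> S \<and> b \<in> S \<and> rook_adj x y a b \<and> rook_adj a b u v}"
    using assms(1) by (simp add: sum_sum_of_bool_eq_card del: sum_of_bool_eq)
  consider "(x, y) = (u, v)" | "x = u" "y \<noteq> v" | "x \<noteq> u" "y = v" | "x \<noteq> u" "y \<noteq> v"
    by auto
  then show ?thesis
  proof cases
    case 1
    then show ?thesis using assms rook_degree[of S x y] by (simp add: rook_adj_sym del: sum_of_bool_eq)
  next
    case 2
    then have "{(a, b). a \<in> S \<and> b \<in> S \<and> rook_adj x y a b \<and> rook_adj a b u v} = (\<lambda>b. (x, b)) ` (S - {y, v})"
      using assms unfolding rook_adj_def by auto
    then show ?thesis using N 2 assms by (simp add: rook_adj_def card_Diff_subset)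
  next
    case 3
    then have "{(a, b). a \<in> S \<and> b \<in> S \<and> rook_adj x y a b \<and> rook_adj a b u v} = (\<lambda>a. (a, y)) ` (S - {x, u})"
      using assms unfolding rook_adj_def by auto
    then show ?thesis using N 3 assms by (simp add: rook_adj_def card_Diff_subset)
  next
    case 4
    then have "{(a, b). a \<in> S \<and> b \<in> S \<and> rook_adj x y a b \<and> rook_adj a b u v} = {(x, v), (u, y)}"
      using assms unfolding rook_adj_def by auto
    then show ?thesis using N 4 by (simp add: rook_adj_def)
  qed
qed

definition layer_arc :: "('a \<Rightarrow> 'a \<Rightarrow> 'a \<Rightarrow> bool) \<Rightarrow> nat \<Rightarrow> 'a \<times> 'a \<times> nat \<Rightarrow> 'a \<times> 'a \<times> nat \<Rightarrow> bool" where
  "layer_arc F m p q = (case p of (x, y, i) \<Rightarrow> case q of (a, b, l) \<Rightarrow>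
     (i = l \<and> rook_adj x y a b) \<or> (fwd m i l \<and> F x y a) \<or> (bwd m i l \<and> F x y b))"

lemma layer_arc_same: "i < m \<Longrightarrow> layer_arc F m (x, y, i) (a, b, i) = rook_adj x y a b"
  by (simp add: layer_arc_def not_fwd_self not_bwd_self)

lemma layer_arc_fwd:
  "odd m \<Longrightarrow> i < m \<Longrightarrow> fwd m i l \<Longrightarrow> layer_arc F m (x, y, i) (a, b, l) = F x y a"
  using not_fwd_self[of i m] not_fwd_and_bwd[of m i l] by (auto simp: layer_arc_def)

lemma layer_arc_bwd:
  "odd m \<Longrightarrow> i < m \<Longrightarrow> bwd m i l \<Longrightarrow> layer_arc F m (x, y, i) (a, b, l) = F x y b"
  using not_bwd_self[of i m] not_fwd_and_bwd[of m i l] by (auto simp: layer_arc_def)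

locale twofold_latin =
  fixes S :: "'a set" and F :: "'a \<Rightarrow> 'a \<Rightarrow> 'a \<Rightarrow> bool"
  assumes finite_S: "finite S"
    and card_third: "x \<in> S \<Longrightarrow> y \<in> S \<Longrightarrow> card {c \<in> S. F x y c} = 2"
    and card_second: "x \<in> S \<Longrightarrow> c \<in> S \<Longrightarrow> card {y \<in> S. F x y c} = 2"
    and card_first: "y \<in> S \<Longrightarrow> c \<in> S \<Longrightarrow> card {x \<in> S. F x y c} = 2"
begin

lemma sum_third: "x \<in> S \<Longrightarrow> y \<in> S \<Longrightarrow> (\<Sum>c\<in>S. of_bool (F x y c)) = (2 :: nat)"
  using card_third finite_S by (simp add: Int_def)

lemma sum_second: "x \<in> S \<Longrightarrow> c \<in> S \<Longrightarrow> (\<Sum>y\<in>S. of_bool (F x y c)) = (2 :: nat)"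
  using card_second finite_S by (simp add: Int_def)

lemma sum_first: "y \<in> S \<Longrightarrow> c \<in> S \<Longrightarrow> (\<Sum>x\<in>S. of_bool (F x y c)) = (2 :: nat)"
  using card_first finite_S by (simp add: Int_def)

lemma card_S_ge_two: "x \<in> S \<Longrightarrow> card S \<ge> 2"
  using card_third[of x x] card_mono[OF finite_S, of "{c \<in> S. F x x c}"] by auto

lemma sum_pairs_third_first:
  assumes "x \<in> S" "y \<in> S"
  shows "(\<Sum>a\<in>S. \<Sum>b\<in>S. of_bool (F x y a)) = 2 * card S"
  using assms by (simp add: sum_third flip: sum_distrib_left del: sum_of_bool_eq)

lemma sum_pairs_third_second:
  assumes "x \<in> S" "y \<in> S"
  shows "(\<Sum>a\<in>S. \<Sum>b\<in>S. of_bool (F x y b)) = 2 * card S"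
  using assms by (simp add: sum_third del: sum_of_bool_eq)

lemma sum_pairs_factors:
  assumes "c \<in> S"
  shows "(\<Sum>a\<in>S. \<Sum>b\<in>S. of_bool (F a b c)) = 2 * card S"
  using assms by (simp add: sum_second del: sum_of_bool_eq)

lemma sum_pairs_chain_first:
  assumes "x \<in> S" "y \<in> S" "w \<in> S"
  shows "(\<Sum>a\<in>S. \<Sum>b\<in>S. of_bool (F x y a \<and> F a b w)) = (4 :: nat)"
proof -
  have "(\<Sum>a\<in>S. \<Sum>b\<in>S. (of_bool (F x y a \<and> F a b w) :: nat))
      = (\<Sum>a\<in>S. of_bool (F x y a) * (\<Sum>b\<in>S. of_bool (F a b w)))"
    by (simp only: of_bool_conj sum_distrib_left)
  also have "\<dots> = (\<Sum>a\<in>S. of_bool (F x y a)) * 2"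
    using assms by (simp add: sum_second sum_distrib_right del: sum_of_bool_eq)
  finally show ?thesis using assms by (simp add: sum_third del: sum_of_bool_eq)
qed

lemma sum_pairs_chain_second:
  assumes "x \<in> S" "y \<in> S" "w \<in> S"
  shows "(\<Sum>a\<in>S. \<Sum>b\<in>S. of_bool (F x y b \<and> F a b w)) = (4 :: nat)"
proof -
  have "(\<Sum>a\<in>S. \<Sum>b\<in>S. (of_bool (F x y b \<and> F a b w) :: nat))
      = (\<Sum>b\<in>S. of_bool (F x y b) * (\<Sum>a\<in>S. of_bool (F a b w)))"
    by (subst sum.swap) (simp only: of_bool_conj sum_distrib_left)
  also have "\<dots> = (\<Sum>b\<in>S. of_bool (F x y b)) * 2"
    using assms by (simp add: sum_first sum_distrib_right del: sum_of_bool_eq)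
  finally show ?thesis using assms by (simp add: sum_third del: sum_of_bool_eq)
qed

lemma sum_pairs_rook_factors:
  assumes "x \<in> S" "y \<in> S" "w \<in> S"
  shows "(\<Sum>a\<in>S. \<Sum>b\<in>S. of_bool (rook_adj x y a b \<and> F a b w)) + 2 * of_bool (F x y w) = (4 :: nat)"
proof -
  have "{(a, b). a \<in> S \<and> b \<in> S \<and> rook_adj x y a b \<and> F a b w} =
        (\<lambda>b. (x, b)) ` ({b \<in> S. F x b w} - {y}) \<union> (\<lambda>a. (a, y)) ` ({a \<in> S. F a y w} - {x})"
    using assms unfolding rook_adj_def by auto
  moreover have "card (\<dots>) = card ({b \<in> S. F x b w} - {y}) + card ({a \<in> S. F a y w} - {x})"
    using finite_S by (subst card_Un_disjoint) auto
  moreover have "card ({b \<in> S. F x b w} - {y}) = 2 - of_bool (F x y w)"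
    using assms finite_S card_second[of x w] by (auto simp: card_Diff_singleton_if)
  moreover have "card ({a \<in> S. F a y w} - {x}) = 2 - of_bool (F x y w)"
    using assms finite_S card_first[of y w] by (auto simp: card_Diff_singleton_if)
  ultimately show ?thesis
    using finite_S by (simp add: sum_sum_of_bool_eq_card del: sum_of_bool_eq)
qed

lemma sum_pairs_first_rook:
  assumes "x \<in> S" "y \<in> S" "u \<in> S" "v \<in> S"
  shows "(\<Sum>a\<in>S. \<Sum>b\<in>S. of_bool (F x y a \<and> rook_adj a b u v)) = (if F x y u then card S else 2)"
proof -
  have "{(a, b). a \<in> S \<and> b \<in> S \<and> F x y a \<and> rook_adj a b u v} =
        (\<lambda>b. (u, b)) ` {b \<in> S - {v}. F x y u} \<union> (\<lambda>a. (a, v)) ` ({a \<in> S. F x y a} - {u})"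
    using assms unfolding rook_adj_def by auto
  moreover have "card (\<dots>) = card {b \<in> S - {v}. F x y u} + card ({a \<in> S. F x y a} - {u})"
    using finite_S by (subst card_Un_disjoint) auto
  moreover have "card {b \<in> S - {v}. F x y u} = (if F x y u then card S - 1 else 0)"
  proof -
    have "{b \<in> S - {v}. F x y u} = (if F x y u then S - {v} else {})" by auto
    then show ?thesis using assms finite_S by simp
  qed
  moreover have "card ({a \<in> S. F x y a} - {u}) = 2 - of_bool (F x y u)"
    using assms finite_S card_third[of x y] by (auto simp: card_Diff_singleton_if)
  ultimately show ?thesis
    using finite_S card_S_ge_two[OF assms(1)] by (simp add: sum_sum_of_bool_eq_card del: sum_of_bool_eq)
qed

lemma sum_pairs_second_rook:
  assumes "x \<in> S" "y \<in> S" "u \<in> S" "v \<in> S"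
  shows "(\<Sum>a\<in>S. \<Sum>b\<in>S. of_bool (F x y b \<and> rook_adj a b u v)) = (if F x y v then card S else 2)"
proof -
  have "(\<Sum>a\<in>S. \<Sum>b\<in>S. (of_bool (F x y b \<and> rook_adj a b u v) :: nat)) =
        (\<Sum>b\<in>S. \<Sum>a\<in>S. of_bool (F x y b \<and> rook_adj b a v u))"
    by (subst sum.swap) (simp add: rook_adj_def conj_commute disj_commute del: sum_of_bool_eq)
  also have "\<dots> = (if F x y v then card S else 2)"
    using sum_pairs_first_rook[of x y v u] assms by simp
  finally show ?thesis .
qed

lemma sum_pairs_arcs_to_other_layer:
  assumes "odd m" "i < m" "l < m" "l \<noteq> i" "x \<in> S" "y \<in> S"
  shows "(\<Sum>a\<in>S. \<Sum>b\<in>S. of_bool (layer_arc F m (x, y, i) (a, b, l))) = 2 * card S"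
  using fwd_or_bwd[OF assms(1-4)]
proof
  assume "fwd m i l"
  show ?thesis
    unfolding layer_arc_fwd[OF assms(1,2) \<open>fwd m i l\<close>] by (rule sum_pairs_third_first[OF assms(5,6)])
next
  assume "bwd m i l"
  show ?thesis
    unfolding layer_arc_bwd[OF assms(1,2) \<open>bwd m i l\<close>] by (rule sum_pairs_third_second[OF assms(5,6)])
qed

lemma sum_pairs_arcs_from_other_layer:
  assumes "odd m" "l < m" "j < m" "l \<noteq> j" "u \<in> S" "v \<in> S"
  shows "(\<Sum>a\<in>S. \<Sum>b\<in>S. of_bool (layer_arc F m (a, b, l) (u, v, j))) = 2 * card S"
proof -
  have "fwd m l j \<or> bwd m l j" using fwd_or_bwd[OF assms(1-3)] assms(4) by auto
  then show ?thesis
  proof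
    assume "fwd m l j"
    show ?thesis
      unfolding layer_arc_fwd[OF assms(1,2) \<open>fwd m l j\<close>] by (rule sum_pairs_factors[OF assms(5)])
  next
    assume "bwd m l j"
    show ?thesis
      unfolding layer_arc_bwd[OF assms(1,2) \<open>bwd m l j\<close>] by (rule sum_pairs_factors[OF assms(6)])
  qed
qed

lemma out_degree:
  assumes "odd m" "x \<in> S" "y \<in> S" "i < m"
  shows "card {q \<in> S \<times> S \<times> {..<m}. layer_arc F m (x, y, i) q} = 2 * m * card S - 2"
proof -
  have "card {q \<in> S \<times> S \<times> {..<m}. layer_arc F m (x, y, i) q} =
      (\<Sum>a\<in>S. \<Sum>b\<in>S. of_bool (layer_arc F m (x, y, i) (a, b, i))) + (m - 1) * (2 * card S)"
    unfolding card_layers[OF finite_S]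
    using assms by (intro sum_lessThan_remove_const sum_pairs_arcs_to_other_layer) auto
  then show ?thesis
    using assms rook_degree[OF finite_S, of x y] card_S_ge_two[of x]
    by (cases m) (simp_all add: layer_arc_same algebra_simps del: sum_of_bool_eq)
qed

lemma in_degree:
  assumes "odd m" "u \<in> S" "v \<in> S" "j < m"
  shows "card {p \<in> S \<times> S \<times> {..<m}. layer_arc F m p (u, v, j)} = 2 * m * card S - 2"
proof -
  have "card {p \<in> S \<times> S \<times> {..<m}. layer_arc F m p (u, v, j)} =
      (\<Sum>a\<in>S. \<Sum>b\<in>S. of_bool (layer_arc F m (a, b, j) (u, v, j))) + (m - 1) * (2 * card S)"
    unfolding card_layers[OF finite_S]
    using assms by (intro sum_lessThan_remove_const sum_pairs_arcs_from_other_layer) auto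
  then show ?thesis
    using assms rook_degree[OF finite_S, of u v] card_S_ge_two[of u]
    by (cases m) (simp_all add: layer_arc_same rook_adj_sym algebra_simps del: sum_of_bool_eq)
qed

lemma sum_pairs_paths_through_other_layer:
  assumes m: "odd m" "i < m" "j < m" "l < m" "l \<noteq> i" "l \<noteq> j"
    and S: "x \<in> S" "y \<in> S" "u \<in> S" "v \<in> S"
  shows "(\<Sum>a\<in>S. \<Sum>b\<in>S.
    of_bool (layer_arc F m (x, y, i) (a, b, l) \<and> layer_arc F m (a, b, l) (u, v, j))) = (4 :: nat)"
proof -
  have "fwd m i l \<or> bwd m i l" "fwd m l j \<or> bwd m l j"
    using fwd_or_bwd m by metis+
  then show ?thesis
  proof (elim disjE)
    assume "fwd m i l" "fwd m l j"
    then show ?thesis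
      using sum_pairs_chain_first[OF S(1-3)] by (simp add: layer_arc_fwd m del: sum_of_bool_eq)
  next
    assume "fwd m i l" "bwd m l j"
    then show ?thesis
      using sum_pairs_chain_first[OF S(1,2,4)] by (simp add: layer_arc_fwd layer_arc_bwd m del: sum_of_bool_eq)
  next
    assume "bwd m i l" "fwd m l j"
    then show ?thesis
      using sum_pairs_chain_second[OF S(1-3)] by (simp add: layer_arc_fwd layer_arc_bwd m del: sum_of_bool_eq)
  next
    assume "bwd m i l" "bwd m l j"
    then show ?thesis
      using sum_pairs_chain_second[OF S(1,2,4)] by (simp add: layer_arc_bwd m del: sum_of_bool_eq)
  qed
qed

lemma common_out_in_neighbours:
  assumes m: "odd m" "i < m" "j < m" and S: "x \<in> S" "y \<in> S" "u \<in> S" "v \<in> S"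
  shows "card {z \<in> S \<times> S \<times> {..<m}. layer_arc F m (x, y, i) z \<and> layer_arc F m z (u, v, j)} =
    (if (x, y, i) = (u, v, j) then 2 * card S + 4 * m - 6
     else if layer_arc F m (x, y, i) (u, v, j) then card S + 4 * m - 6 else 4 * m - 2)"
proof -
  define f where "f l = (\<Sum>a\<in>S. \<Sum>b\<in>S.
    of_bool (layer_arc F m (x, y, i) (a, b, l) \<and> layer_arc F m (a, b, l) (u, v, j)) :: nat)" for l
  have paths: "card {z \<in> S \<times> S \<times> {..<m}. layer_arc F m (x, y, i) z \<and> layer_arc F m z (u, v, j)} = (\<Sum>l<m. f l)"
    unfolding f_def by (rule card_layers[OF finite_S])
  have other: "f l = 4" if "l < m" "l \<noteq> i" "l \<noteq> j" for l
    unfolding f_def using sum_pairs_paths_through_other_layer m that S .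
  have n: "card S \<ge> 2" using card_S_ge_two S(1) .
  show ?thesis
  proof (cases "i = j")
    case True
    have "(\<Sum>l<m. f l) = f i + (m - 1) * 4"
      using sum_lessThan_remove_const[OF m(2)] other True by blast
    moreover have "f i = (\<Sum>a\<in>S. \<Sum>b\<in>S. of_bool (rook_adj x y a b \<and> rook_adj a b u v))"
      unfolding f_def using True m by (simp add: layer_arc_same del: sum_of_bool_eq)
    ultimately show ?thesis
      using paths True m n rook_common_neighbours[OF finite_S S] by (auto simp: layer_arc_same)
  next
    case False
    have sum: "(\<Sum>l<m. f l) = f i + f j + (m - 2) * 4"
      using sum_lessThan_remove2_const[OF m(2,3) False] other by blast
    have "fwd m i j \<or> bwd m i j" using fwd_or_bwd m False by metis
    then show ?thesis
    proof
      assume fwd: "fwd m i j"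
      have "f i = (\<Sum>a\<in>S. \<Sum>b\<in>S. of_bool (rook_adj x y a b \<and> F a b u))"
        unfolding f_def using m fwd by (simp add: layer_arc_same layer_arc_fwd del: sum_of_bool_eq)
      moreover have "f j = (\<Sum>a\<in>S. \<Sum>b\<in>S. of_bool (F x y a \<and> rook_adj a b u v))"
        unfolding f_def using m fwd by (simp add: layer_arc_same layer_arc_fwd del: sum_of_bool_eq)
      ultimately show ?thesis
        using paths sum False m fwd n sum_pairs_rook_factors[OF S(1-3)] sum_pairs_first_rook[OF S]
        by (auto simp: layer_arc_fwd)
    next
      assume bwd: "bwd m i j"
      have "f i = (\<Sum>a\<in>S. \<Sum>b\<in>S. of_bool (rook_adj x y a b \<and> F a b v))"
        unfolding f_def using m bwd by (simp add: layer_arc_same layer_arc_bwd del: sum_of_bool_eq)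
      moreover have "f j = (\<Sum>a\<in>S. \<Sum>b\<in>S. of_bool (F x y b \<and> rook_adj a b u v))"
        unfolding f_def using m bwd by (simp add: layer_arc_same layer_arc_bwd del: sum_of_bool_eq)
      ultimately show ?thesis
        using paths sum False m bwd n sum_pairs_rook_factors[OF S(1,2,4)] sum_pairs_second_rook[OF S]
        by (auto simp: layer_arc_bwd)
    qed
  qed
qed

theorem dsrg_layer_arc:
  assumes "odd m"
  shows "dsrg (S \<times> S \<times> {..<m}) (layer_arc F m) (m * card S ^ 2) (2 * m * card S - 2)
    (2 * card S + 4 * m - 6) (card S + 4 * m - 6) (4 * m - 2)"
  unfolding dsrg_def
proof (intro conjI ballI)
  show "finite (S \<times> S \<times> {..<m})" using finite_S by simp
  show "card (S \<times> S \<times> {..<m}) = m * card S ^ 2"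
    by (simp add: card_cartesian_product power2_eq_square)
  fix p assume "p \<in> S \<times> S \<times> {..<m}"
  then obtain x y i where p: "p = (x, y, i)" "x \<in> S" "y \<in> S" "i < m" by auto
  show "\<not> layer_arc F m p p" using p by (simp add: layer_arc_same rook_adj_def)
  show "card {q \<in> S \<times> S \<times> {..<m}. layer_arc F m p q} = 2 * m * card S - 2"
    using out_degree assms p by simp
  show "card {q \<in> S \<times> S \<times> {..<m}. layer_arc F m q p} = 2 * m * card S - 2"
    using in_degree assms p by simp
  fix q assume "q \<in> S \<times> S \<times> {..<m}"
  then obtain u v j where q: "q = (u, v, j)" "u \<in> S" "v \<in> S" "j < m" by auto
  show "card {z \<in> S \<times> S \<times> {..<m}. layer_arc F m p z \<and> layer_arc F m z q} =
    (if p = q then 2 * card S + 4 * m - 6 else if layer_arc F m p q then card S + 4 * m - 6 else 4 * m - 2)"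
    using common_out_in_neighbours assms p q by simp
qed

end

lemma (in group) card_mult_preimage:
  assumes "x \<in> carrier G" "T \<subseteq> carrier G"
  shows "card {y \<in> carrier G. x \<otimes> y \<in> T} = card T"
    and "card {y \<in> carrier G. y \<otimes> x \<in> T} = card T"
proof -
  have "(\<lambda>y. x \<otimes> y) ` {y \<in> carrier G. x \<otimes> y \<in> T} = T"
  proof (intro equalityI subsetI)
    fix t assume "t \<in> T"
    with assms have "inv x \<otimes> t \<in> {y \<in> carrier G. x \<otimes> y \<in> T}" "t = x \<otimes> (inv x \<otimes> t)"
      by (auto simp: m_assoc[symmetric])
    then show "t \<in> (\<lambda>y. x \<otimes> y) ` {y \<in> carrier G. x \<otimes> y \<in> T}" by blast
  qed auto
  then show "card {y \<in> carrier G. x \<otimes> y \<in> T} = card T"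
    using card_image[OF inj_on_subset[OF inj_on_cmult[OF assms(1)]], of "{y \<in> carrier G. x \<otimes> y \<in> T}"]
    by auto
  have "(\<lambda>y. y \<otimes> x) ` {y \<in> carrier G. y \<otimes> x \<in> T} = T"
  proof (intro equalityI subsetI)
    fix t assume "t \<in> T"
    with assms have "t \<otimes> inv x \<in> {y \<in> carrier G. y \<otimes> x \<in> T}" "t = t \<otimes> inv x \<otimes> x"
      by (auto simp: m_assoc)
    then show "t \<in> (\<lambda>y. y \<otimes> x) ` {y \<in> carrier G. y \<otimes> x \<in> T}" by blast
  qed auto
  then show "card {y \<in> carrier G. y \<otimes> x \<in> T} = card T"
    using card_image[OF inj_on_subset[OF inj_on_multc[OF assms(1)]], of "{y \<in> carrier G. y \<otimes> x \<in> T}"]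
    by auto
qed

lemma (in group) twofold_latin_mult:
  assumes "finite (carrier G)" "g \<in> carrier G" "g \<noteq> \<one>"
  shows "twofold_latin (carrier G) (\<lambda>x y c. c = x \<otimes> y \<or> c = x \<otimes> y \<otimes> g)"
proof -
  have product_iff: "(c = x \<otimes> y \<or> c = x \<otimes> y \<otimes> g) \<longleftrightarrow> x \<otimes> y \<in> {c, c \<otimes> inv g}"
    if "x \<in> carrier G" "y \<in> carrier G" "c \<in> carrier G" for x y c
    using that assms(2) inv_solve_right[of "x \<otimes> y" c g] by auto
  have card_two: "card {c, c \<otimes> inv g} = 2" if "c \<in> carrier G" for c
    using that assms(2,3) by simp
  show ?thesis
  proof unfold_locales
    fix x y assume "x \<in> carrier G" "y \<in> carrier G"
    then have "{c \<in> carrier G. c = x \<otimes> y \<or> c = x \<otimes> y \<otimes> g} = {x \<otimes> y, x \<otimes> y \<otimes> g}"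
      and "x \<otimes> y \<noteq> x \<otimes> y \<otimes> g"
      using assms by auto
    then show "card {c \<in> carrier G. c = x \<otimes> y \<or> c = x \<otimes> y \<otimes> g} = 2" by simp
  next
    fix x c assume "x \<in> carrier G" "c \<in> carrier G"
    then have "{y \<in> carrier G. c = x \<otimes> y \<or> c = x \<otimes> y \<otimes> g} = {y \<in> carrier G. x \<otimes> y \<in> {c, c \<otimes> inv g}}"
      using product_iff by blast
    then show "card {y \<in> carrier G. c = x \<otimes> y \<or> c = x \<otimes> y \<otimes> g} = 2"
      using card_mult_preimage(1)[of x "{c, c \<otimes> inv g}"] card_two \<open>x \<in> carrier G\<close> \<open>c \<in> carrier G\<close> assms(2)
      by simp
  next
    fix y c assume "y \<in> carrier G" "c \<in> carrier G"
    then have "{x \<in> carrier G. c = x \<otimes> y \<or> c = x \<otimes> y \<otimes> g} = {x \<in> carrier G. x \<otimes> y \<in> {c, c \<otimes> inv g}}"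
      using product_iff by blast
    then show "card {x \<in> carrier G. c = x \<otimes> y \<or> c = x \<otimes> y \<otimes> g} = 2"
      using card_mult_preimage(2)[of y "{c, c \<otimes> inv g}"] card_two \<open>y \<in> carrier G\<close> \<open>c \<in> carrier G\<close> assms(2)
      by simp
  qed (fact assms(1))
qed

lemma gamma_arc_eq_layer_arc:
  "gamma_arc G g m = layer_arc (\<lambda>x y c. c = x \<otimes>\<^bsub>G\<^esub> y \<or> c = x \<otimes>\<^bsub>G\<^esub> y \<otimes>\<^bsub>G\<^esub> g) m"
  by (auto simp: fun_eq_iff gamma_arc_def layer_arc_def rook_adj_def)

theorem mainTheorem2:
  fixes G :: "('a, 'b) monoid_scheme" and g :: 'a and n m :: nat
  assumes "group G" and "finite (carrier G)" and "card (carrier G) = n" and "n \<ge> 2"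
    and "g \<in> carrier G" and "g \<noteq> \<one>\<^bsub>G\<^esub>"
    and "odd m" and "m \<ge> 3"
  shows "dsrg (gamma_vertices G m) (gamma_arc G g m)
           (m * n ^ 2) (2 * m * n - 2) (2 * n + 4 * m - 6) (n + 4 * m - 6) (4 * m - 2)"
proof -
  interpret twofold_latin "carrier G" "\<lambda>x y c. c = x \<otimes>\<^bsub>G\<^esub> y \<or> c = x \<otimes>\<^bsub>G\<^esub> y \<otimes>\<^bsub>G\<^esub> g"
    using group.twofold_latin_mult assms(1,2,5,6) .
  show ?thesis
    using dsrg_layer_arc[OF \<open>odd m\<close>] \<open>card (carrier G) = n\<close>
    unfolding gamma_vertices_def gamma_arc_eq_layer_arc by simp
qed

end
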